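(* Let $\operatorname{Cs}(4)=\{x,y,z\}$ be the quandle with multiplication $xx=x$, $yy=y$, $zz=z$, $xy=x$, $xz=y$, $yx=y$, $yz=x$, $zx=z$, $zy=z$. Then the set of non-zero maximal quandles in $\mathbb{Z}[\operatorname{Cs}(4)]$ is $\operatorname{mq}(\mathbb{Z}[\operatorname{Cs}(4)])=\{N_1,N_2\}$, where $$N_1=\big\{z,~(1-\beta)x+\beta y~|~\beta\in\mathbb{Z}\big\},\qquad N_2=\big\{\alpha x+\alpha y+(1-2\alpha)z~|~\alpha\in\mathbb{Z}\big\}.$$
   Context: A quandle is a non-empty set with a binary operation $(u,v)\mapsto uv$ such that $uu=u$; for all $u,v$ there is a unique $w$ with $u=wv$; and $(uv)w=(uw)(vw)$. For a quandle $Q$, the quandle ring $\mathbb{Z}[Q]$ is the free abelian group with basis $Q$, with multiplication $\big(\sum_i\alpha_i q_i\big)\big(\sum_j\beta_j q_j\big)=\sum_{i,j}\alpha_i\beta_j (q_iq_j)$. A quandle in $\mathbb{Z}[Q]$ is a subset closed under the ring multiplication which is a quandle under the restricted multiplication. $\operatorname{mq}(\mathbb{Z}[Q])$ is the set of all quandles in $\mathbb{Z}[Q]$ different from $\{0\}$ that are maximal with respect to inclusion among quandles in $\mathbb{Z}[Q]$. *)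

theory Defs
  imports Main
begin

text \<open>Closure of S under m is required separately.\<close>
definition is_quandle :: "'a set \<Rightarrow> ('a \<Rightarrow> 'a \<Rightarrow> 'a) \<Rightarrow> bool" where
  "is_quandle S m \<longleftrightarrow>
     S \<noteq> {} \<and>
     (\<forall>u\<in>S. m u u = u) \<and>
     (\<forall>u\<in>S. \<forall>v\<in>S. \<exists>!w. w \<in> S \<and> u = m w v) \<and>
     (\<forall>u\<in>S. \<forall>v\<in>S. \<forall>w\<in>S. m (m u v) w = m (m u w) (m v w))"

text \<open>Quandle ring Z[Q] for a finite quandle whose underlying set is a finite type 'a:
  elements are functions 'a \<Rightarrow> int (coefficient vectors w.r.t. the basis Q).\<close>
definition qring_mult :: "('a::finite \<Rightarrow> 'a \<Rightarrow> 'a) \<Rightarrow> ('a \<Rightarrow> int) \<Rightarrow> ('a \<Rightarrow> int) \<Rightarrow> ('a \<Rightarrow> int)" where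
  "qring_mult op u v = (\<lambda>r. \<Sum>p\<in>UNIV. \<Sum>q\<in>UNIV. if op p q = r then u p * v q else 0)"

definition quandle_in_ring :: "('a::finite \<Rightarrow> 'a \<Rightarrow> 'a) \<Rightarrow> ('a \<Rightarrow> int) set \<Rightarrow> bool" where
  "quandle_in_ring op S \<longleftrightarrow>
     (\<forall>u\<in>S. \<forall>v\<in>S. qring_mult op u v \<in> S) \<and> is_quandle S (qring_mult op)"

definition mq :: "('a::finite \<Rightarrow> 'a \<Rightarrow> 'a) \<Rightarrow> ('a \<Rightarrow> int) set set" where
  "mq op = {S. quandle_in_ring op S \<and> S \<noteq> {(\<lambda>_. 0)} \<and>
               (\<forall>T. quandle_in_ring op T \<and> S \<subseteq> T \<longrightarrow> T = S)}"

datatype cs4 = X | Y | Z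

instance cs4 :: finite
proof
  have "(UNIV :: cs4 set) = {X, Y, Z}" using cs4.exhaust by auto
  then show "finite (UNIV :: cs4 set)" by (metis finite.emptyI finite_insert)
qed

fun cs4_op :: "cs4 \<Rightarrow> cs4 \<Rightarrow> cs4" where
  "cs4_op X X = X" | "cs4_op Y Y = Y" | "cs4_op Z Z = Z"
| "cs4_op X Y = X" | "cs4_op X Z = Y"
| "cs4_op Y X = Y" | "cs4_op Y Z = X"
| "cs4_op Z X = Z" | "cs4_op Z Y = Z"

definition vec3 :: "int \<Rightarrow> int \<Rightarrow> int \<Rightarrow> cs4 \<Rightarrow> int" where
  "vec3 a b c = (\<lambda>p. case p of X \<Rightarrow> a | Y \<Rightarrow> b | Z \<Rightarrow> c)"

end

theory Submission
  imports Defs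
begin

text \<open>Every element of a quandle in \<open>\<int>[Q]\<close> is idempotent, and the non-zero idempotents
  of \<open>\<int>[Cs(4)]\<close> form exactly \<open>N\<^sub>1 \<union> N\<^sub>2\<close>; the zero vector lies in no quandle other
  than \<open>{0}\<close>, because right multiplication by 0 is constant.  No quandle meets both \<open>N\<^sub>1 - N\<^sub>2\<close> and \<open>N\<^sub>2 - N\<^sub>1\<close>: right
  multiplication by \<open>\<alpha>x + \<alpha>y + (1 - 2\<alpha>)z\<close> with \<open>\<alpha> \<noteq> 0\<close> maps the line
  \<open>(1 - \<beta>)x + \<beta>y\<close> to itself, multiplying \<open>2\<beta> - 1\<close> by \<open>4\<alpha> - 1\<close>.  It is surjective on
  the quandle's points of that line while strictly increasing \<open>|2\<beta> - 1|\<close>, which is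
  impossible by infinite descent.  So every quandle other than \<open>{0}\<close> lies in \<open>N\<^sub>1\<close> or
  \<open>N\<^sub>2\<close>, and these two are the maximal ones.\<close>

lemma empty_if_surjective_expanding:
  fixes m :: "'a \<Rightarrow> nat"
  assumes surj: "\<And>u. u \<in> L \<Longrightarrow> \<exists>w\<in>L. u = f w"
    and expanding: "\<And>w. w \<in> L \<Longrightarrow> m w < m (f w)"
  shows "L = {}"
proof (rule ccontr)
  assume "L \<noteq> {}"
  then obtain u where "u \<in> L" and least: "\<And>y. y \<in> L \<Longrightarrow> m u \<le> m y"
    using ex_has_least_nat[of "\<lambda>y. y \<in> L" _ m] by blast
  then obtain w where "w \<in> L" "u = f w" using surj by blast
  with least expanding show False by fastforce
qed

lemma is_quandle_idem: "is_quandle S m \<Longrightarrow> u \<in> S \<Longrightarrow> m u u = u"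
  unfolding is_quandle_def by (elim conjE) blast

lemma is_quandle_right_divisible:
  assumes "is_quandle S m" and "u \<in> S" and "v \<in> S"
  shows "\<exists>w\<in>S. u = m w v"
proof -
  have "\<forall>u\<in>S. \<forall>v\<in>S. \<exists>!w. w \<in> S \<and> u = m w v"
    using assms(1) unfolding is_quandle_def by (elim conjE)
  then have "\<exists>!w. w \<in> S \<and> u = m w v" using assms(2,3) by blast
  then show ?thesis by blast
qed

lemma qring_mult_zero_right [simp]: "qring_mult op u (\<lambda>_. 0) = (\<lambda>_. 0)"
  unfolding qring_mult_def by (simp cong: if_cong)

lemma zero_in_quandle_in_ring_imp_singleton:
  assumes "quandle_in_ring op S" and "(\<lambda>_. 0) \<in> S"
  shows "S = {\<lambda>_. 0}"
proof -
  have quandle: "is_quandle S (qring_mult op)"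
    using assms(1) unfolding quandle_in_ring_def by (elim conjE)
  have "u = (\<lambda>_. 0)" if "u \<in> S" for u
  proof -
    obtain w where "u = qring_mult op w (\<lambda>_. 0)"
      using is_quandle_right_divisible[OF quandle \<open>u \<in> S\<close> assms(2)] by blast
    then show ?thesis by simp
  qed
  with assms(2) show ?thesis by blast
qed

lemma is_quandle_trivial:
  assumes "S \<noteq> {}" and "\<And>u v. u \<in> S \<Longrightarrow> v \<in> S \<Longrightarrow> m u v = u"
  shows "is_quandle S m"
proof -
  have "\<exists>!w. w \<in> S \<and> u = m w v" if "u \<in> S" "v \<in> S" for u v
    using that assms(2) by (intro ex1I[of _ u]) auto
  then show ?thesis
    using assms unfolding is_quandle_def by simp
qed

lemma mq_eq_pair:
  assumes quandle_A: "quandle_in_ring op A" and quandle_B: "quandle_in_ring op B"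
    and A_nonzero: "A \<noteq> {\<lambda>_. 0}" and B_nonzero: "B \<noteq> {\<lambda>_. 0}"
    and incomparable: "\<not> A \<subseteq> B" "\<not> B \<subseteq> A"
    and cover: "\<And>S. quandle_in_ring op S \<Longrightarrow> S \<noteq> {\<lambda>_. 0} \<Longrightarrow> S \<subseteq> A \<or> S \<subseteq> B"
  shows "mq op = {A, B}"
proof
  show "mq op \<subseteq> {A, B}"
  proof
    fix S assume "S \<in> mq op"
    then have "quandle_in_ring op S" "S \<noteq> {\<lambda>_. 0}"
      and S_maximal: "\<And>T. quandle_in_ring op T \<Longrightarrow> S \<subseteq> T \<Longrightarrow> T = S"
      unfolding mq_def by blast+
    then have "S \<subseteq> A \<or> S \<subseteq> B" using cover by blast
    then show "S \<in> {A, B}" using S_maximal quandle_A quandle_B by blast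
  qed
  have maximal: "T = C"
    if "quandle_in_ring op C" "C \<noteq> {\<lambda>_. 0}" "quandle_in_ring op T" "C \<subseteq> T"
      and "C = A \<or> C = B" for C T
  proof -
    have "C \<noteq> {}" using that(1) unfolding quandle_in_ring_def is_quandle_def by blast
    with that(2,4) have "T \<noteq> {\<lambda>_. 0}" by blast
    then have "T \<subseteq> A \<or> T \<subseteq> B" using cover that(3) by blast
    then show "T = C" using that(4,5) incomparable by blast
  qed
  show "{A, B} \<subseteq> mq op"
    unfolding mq_def using maximal quandle_A quandle_B A_nonzero B_nonzero by blast
qed

abbreviation cs4_mult :: "(cs4 \<Rightarrow> int) \<Rightarrow> (cs4 \<Rightarrow> int) \<Rightarrow> cs4 \<Rightarrow> int" (infixl "\<diamond>" 70)
  where "u \<diamond> v \<equiv> qring_mult cs4_op u v"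

lemma UNIV_cs4: "(UNIV :: cs4 set) = {X, Y, Z}"
  using cs4.exhaust by auto

lemma cs4_fun_eq_iff: "f = g \<longleftrightarrow> f X = g X \<and> f Y = g Y \<and> f Z = g Z"
  for f g :: "cs4 \<Rightarrow> 'b"
proof
  assume "f X = g X \<and> f Y = g Y \<and> f Z = g Z"
  then show "f = g" by (intro ext) (metis cs4.exhaust)
qed simp

lemma cs4_mult_X [simp]: "(u \<diamond> v) X = u X * (v X + v Y) + u Y * v Z"
  and cs4_mult_Y [simp]: "(u \<diamond> v) Y = u Y * (v X + v Y) + u X * v Z"
  and cs4_mult_Z [simp]: "(u \<diamond> v) Z = u Z * (v X + v Y + v Z)"
  unfolding qring_mult_def UNIV_cs4 by (simp_all add: algebra_simps)

lemma vec3_apply [simp]: "vec3 a b c X = a" "vec3 a b c Y = b" "vec3 a b c Z = c"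
  by (simp_all add: vec3_def)

definition swap_xy :: "(cs4 \<Rightarrow> int) \<Rightarrow> cs4 \<Rightarrow> int" where
  "swap_xy u = vec3 (u Y) (u X) (u Z)"

lemma swap_xy_swap_xy [simp]: "swap_xy (swap_xy u) = u"
  by (simp add: swap_xy_def cs4_fun_eq_iff)

lemma swap_xy_mult: "swap_xy (u \<diamond> w) = swap_xy u \<diamond> swap_xy w"
  by (simp add: swap_xy_def cs4_fun_eq_iff algebra_simps)

definition N1 :: "(cs4 \<Rightarrow> int) set" where
  "N1 = {u. (u X = 0 \<and> u Y = 0 \<and> u Z = 1) \<or> (u Z = 0 \<and> u X + u Y = 1)}"

definition N2 :: "(cs4 \<Rightarrow> int) set" where
  "N2 = {u. u X = u Y \<and> u Z = 1 - 2 * u X}"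

lemma N1_eq: "{vec3 0 0 1} \<union> {vec3 (1 - \<beta>) \<beta> 0 | \<beta>. True} = N1"
proof
  show "N1 \<subseteq> {vec3 0 0 1} \<union> {vec3 (1 - \<beta>) \<beta> 0 | \<beta>. True}"
  proof
    fix u assume "u \<in> N1"
    then have "u = vec3 0 0 1 \<or> u = vec3 (1 - u Y) (u Y) 0"
      by (auto simp: N1_def cs4_fun_eq_iff)
    then show "u \<in> {vec3 0 0 1} \<union> {vec3 (1 - \<beta>) \<beta> 0 | \<beta>. True}" by blast
  qed
qed (auto simp: N1_def)

lemma N2_eq: "{vec3 \<alpha> \<alpha> (1 - 2 * \<alpha>) | \<alpha>. True} = N2"
proof
  show "N2 \<subseteq> {vec3 \<alpha> \<alpha> (1 - 2 * \<alpha>) | \<alpha>. True}"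
  proof
    fix u assume "u \<in> N2"
    then have "u = vec3 (u X) (u X) (1 - 2 * u X)" by (simp add: N2_def cs4_fun_eq_iff)
    then show "u \<in> {vec3 \<alpha> \<alpha> (1 - 2 * \<alpha>) | \<alpha>. True}" by blast
  qed
qed (auto simp: N2_def)

lemma cs4_idempotent_cases:
  assumes "u \<diamond> u = u"
  shows "u = (\<lambda>_. 0) \<or> u \<in> N1 \<or> u \<in> N2"
proof -
  define a b c where "a = u X" and "b = u Y" and "c = u Z"
  have ea: "a = a * (a + b) + b * c" and ec: "c = c * (a + b + c)"
    using assms unfolding a_def b_def c_def by (metis cs4_mult_X cs4_mult_Z)+
  have eb: "b = b * (a + b) + a * c"
    using assms unfolding a_def b_def c_def by (metis cs4_mult_Y)
  \<comment> \<open>the coefficient sum is a ring homomorphism to \<open>\<int>\<close>, so it is 0 or 1\<close>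
  have "(a + b + c) * (a + b + c - 1) = 0"
    using ea eb ec by (simp add: algebra_simps)
  then consider "a + b + c = 0" | "a + b + c = 1" by auto
  then show ?thesis
  proof cases
    case 1
    then have "c = 0" "b = - a" using ec by auto
    then have "a = 0" using ea by simp
    then have "u = (\<lambda>_. 0)" using \<open>c = 0\<close> \<open>b = - a\<close>
      unfolding cs4_fun_eq_iff a_def b_def c_def by simp
    then show ?thesis by simp
  next
    case 2
    then have "a + b = 1 - c" by simp
    then have "a = a * (1 - c) + b * c" using ea by simp
    then have "c * (b - a) = 0" by (auto simp: algebra_simps)
    then have "c = 0 \<or> b = a" by simp
    then show ?thesis using 2 unfolding N1_def N2_def a_def b_def c_def by auto
  qed
qed

lemma N1_cases:
  assumes "v \<in> N1"
  obtains "v = vec3 0 0 1" and "\<And>w. w \<diamond> v = swap_xy w"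
  | "\<And>w. w \<diamond> v = w"
  using assms unfolding N1_def
  by (auto simp: cs4_fun_eq_iff swap_xy_def)

lemma swap_xy_N1: "u \<in> N1 \<Longrightarrow> swap_xy u \<in> N1"
  by (auto simp: N1_def swap_xy_def)

lemma quandle_in_ring_N1: "quandle_in_ring cs4_op N1"
  unfolding quandle_in_ring_def is_quandle_def
proof (intro conjI ballI)
  have "vec3 0 0 1 \<in> N1" by (simp add: N1_def)
  then show "N1 \<noteq> {}" by blast
next
  fix u v assume u: "u \<in> N1" and v: "v \<in> N1"
  from v show "u \<diamond> v \<in> N1"
    by (cases rule: N1_cases) (simp_all add: u swap_xy_N1)
  from v show "\<exists>!w. w \<in> N1 \<and> u = w \<diamond> v"
  proof (cases rule: N1_cases)
    case 1
    then show ?thesis using u swap_xy_N1 by (metis swap_xy_swap_xy)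
  next
    case 2
    then show ?thesis using u by auto
  qed
next
  fix u assume "u \<in> N1"
  then show "u \<diamond> u = u"
    by (cases rule: N1_cases) (simp_all add: swap_xy_def cs4_fun_eq_iff)
next
  fix u v w assume "w \<in> N1"
  then show "u \<diamond> v \<diamond> w = (u \<diamond> w) \<diamond> (v \<diamond> w)"
    by (cases rule: N1_cases) (simp_all add: swap_xy_mult)
qed

lemma N2_mult:
  assumes "u \<in> N2" and "v \<in> N2"
  shows "u \<diamond> v = u"
proof -
  have coordinates: "u Y = u X" "u Z = 1 - 2 * u X" "v Y = v X" "v Z = 1 - 2 * v X"
    using assms by (auto simp: N2_def)
  show ?thesis
    unfolding cs4_fun_eq_iff cs4_mult_X cs4_mult_Y cs4_mult_Z coordinates
    by (simp add: algebra_simps)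
qed

lemma quandle_in_ring_N2: "quandle_in_ring cs4_op N2"
proof -
  have "vec3 0 0 1 \<in> N2" by (simp add: N2_def)
  then have "is_quandle N2 (\<diamond>)" by (intro is_quandle_trivial N2_mult) blast+
  then show ?thesis unfolding quandle_in_ring_def using N2_mult by simp
qed

lemma N2_mult_on_line:
  assumes "w Z = 0" "w X + w Y = 1" and "v \<in> N2"
  shows "2 * (w \<diamond> v) Y - 1 = (4 * v X - 1) * (2 * w Y - 1)"
proof -
  have "w X = 1 - w Y" "v Y = v X" "v Z = 1 - 2 * v X"
    using assms by (auto simp: N2_def)
  then have "(w \<diamond> v) Y = w Y * (v X + v X) + (1 - w Y) * (1 - 2 * v X)"
    by (simp only: cs4_mult_Y)
  then show ?thesis by (simp add: algebra_simps)
qed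

lemma abs_mult_gt:
  fixes a g :: int
  assumes "a \<noteq> 0"
  shows "\<bar>2 * g - 1\<bar> < \<bar>(4 * a - 1) * (2 * g - 1)\<bar>"
proof -
  have "\<bar>2 * g - 1\<bar> < 3 * \<bar>2 * g - 1\<bar>" by arith
  also have "\<dots> \<le> \<bar>4 * a - 1\<bar> * \<bar>2 * g - 1\<bar>"
    using assms by (intro mult_right_mono) arith+
  also have "\<dots> = \<bar>(4 * a - 1) * (2 * g - 1)\<bar>"
    by (rule abs_mult[symmetric])
  finally show ?thesis .
qed

lemma quandle_in_cs4_ring_subset_N1_or_N2:
  assumes quandle: "quandle_in_ring cs4_op S" and nonzero: "S \<noteq> {\<lambda>_. 0}"
  shows "S \<subseteq> N1 \<or> S \<subseteq> N2"
proof (rule ccontr)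
  have is_quandle: "is_quandle S (\<diamond>)"
    using quandle unfolding quandle_in_ring_def by (elim conjE)
  have "(\<lambda>_. 0) \<notin> S"
    using zero_in_quandle_in_ring_imp_singleton quandle nonzero by blast
  then have S_sub: "S \<subseteq> N1 \<union> N2"
    using cs4_idempotent_cases is_quandle_idem[OF is_quandle] by blast
  assume "\<not> (S \<subseteq> N1 \<or> S \<subseteq> N2)"
  then obtain u v where u: "u \<in> S" "u \<notin> N2" and v: "v \<in> S" "v \<notin> N1" by blast
  have "u Z = 0" using u S_sub by (auto simp: N1_def N2_def)
  have "v \<in> N2" "v X \<noteq> 0" using v S_sub by (auto simp: N1_def N2_def)
  let ?L = "{w \<in> S. w Z = 0}"
  have on_line: "w X + w Y = 1" if "w \<in> ?L" for w
    using that S_sub by (auto simp: N1_def N2_def)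
  have "?L = {}"
  proof (rule empty_if_surjective_expanding[where f = "\<lambda>w. w \<diamond> v"
        and m = "\<lambda>w. nat \<bar>2 * w Y - 1\<bar>"])
    fix w assume "w \<in> ?L"
    then have "2 * (w \<diamond> v) Y - 1 = (4 * v X - 1) * (2 * w Y - 1)"
      using N2_mult_on_line on_line \<open>v \<in> N2\<close> by blast
    then have "\<bar>2 * w Y - 1\<bar> < \<bar>2 * (w \<diamond> v) Y - 1\<bar>"
      using abs_mult_gt[OF \<open>v X \<noteq> 0\<close>] by simp
    then show "nat \<bar>2 * w Y - 1\<bar> < nat \<bar>2 * (w \<diamond> v) Y - 1\<bar>"
      by (simp only: nat_less_eq_zless[OF abs_ge_zero])
  next
    fix w assume "w \<in> ?L"
    then obtain w' where "w' \<in> S" "w = w' \<diamond> v"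
      using is_quandle_right_divisible[OF is_quandle _ v(1)] by blast
    moreover have "v X + v Y + v Z = 1" using \<open>v \<in> N2\<close> by (simp add: N2_def)
    ultimately show "\<exists>w'\<in>?L. w = w' \<diamond> v" using \<open>w \<in> ?L\<close> by auto
  qed
  then show False using u(1) \<open>u Z = 0\<close> by blast
qed

theorem theorem5p4:
  shows "mq cs4_op =
    { {vec3 0 0 1} \<union> {vec3 (1 - \<beta>) \<beta> 0 | \<beta>. True},
      {vec3 \<alpha> \<alpha> (1 - 2 * \<alpha>) | \<alpha>. True} }"
proof -
  have "vec3 1 0 0 \<in> N1 - N2" "vec3 1 1 (-1) \<in> N2 - N1"
    by (simp_all add: N1_def N2_def)
  moreover have "vec3 0 0 1 \<in> N1 \<inter> N2" "vec3 0 0 1 \<noteq> (\<lambda>_. 0)"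
    by (simp_all add: N1_def N2_def cs4_fun_eq_iff)
  ultimately have "mq cs4_op = {N1, N2}"
    using mq_eq_pair[OF quandle_in_ring_N1 quandle_in_ring_N2]
      quandle_in_cs4_ring_subset_N1_or_N2 by blast
  then show ?thesis unfolding N1_eq N2_eq .
qed

end
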